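(* Assume (A1)–(A4). Let $T>0$ and $N\ge0$. For $K\ge1$ let $u^K$ solve $$\frac{d}{dt}u^{K}_i(t)=R(i\delta_K)+\sum_{l\in\mathbb{Z}}p((l+i)\delta_K)h_KG(lh_K)e^{\log K(u^{K}_{l+i}(t)-u^{K}_i(t))},\quad u^K_i(0)=u^{K,0}(i\delta_K).$$ Then there is a constant $C$ (possibly depending on $T$ and $N$) such that for all $K\ge1$, $t\in[0,T]$ and $i\in\mathbb{Z}$ with $i\delta_K\in[-N,N]$, $$\Big|\frac{u^K_{i+1}(t)-u^K_i(t)}{\delta_K}\Big|\le C.$$
   Context: Let $R,p,G:\mathbb{R}\to\mathbb{R}$; for each integer $K\ge1$ let $\delta_K>0$ with $\delta_K\to0$ and $h_K:=\delta_K\log K\to0$. (A1) $R,p$ Lipschitz with $\underline{R}\le R\le\overline{R}$, $0<\underline{p}\le p\le\overline{p}$. (A2) $G$ positive continuous, $\int G=1$, $G(x)=f(x)e^{-|x|}$ with $0<\min f\le f\le\sup f<\infty$. (A3) $u^{K,0}(i\delta_K)\le-A|i\delta_K|+B_1$ for all $i,K$, constants $A,B_1>0$. (A4) There is $L\in(0,1)$ with $|u^{K,0}((i+1)\delta_K)-u^{K,0}(i\delta_K)|\le L\delta_K$ for all $i,K$. *)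

theory Defs
  imports "HOL-Analysis.Analysis"
begin

definition hK :: "(nat \<Rightarrow> real) \<Rightarrow> nat \<Rightarrow> real" where
  "hK delta K = delta K * ln (real K)"

definition rhs_term ::
  "(real \<Rightarrow> real) \<Rightarrow> (real \<Rightarrow> real) \<Rightarrow> (nat \<Rightarrow> real) \<Rightarrow> (nat \<Rightarrow> int \<Rightarrow> real \<Rightarrow> real)
    \<Rightarrow> nat \<Rightarrow> int \<Rightarrow> real \<Rightarrow> int \<Rightarrow> real" where
  "rhs_term p G delta u K i t l =
     p (real_of_int (l + i) * delta K) * hK delta K * G (real_of_int l * hK delta K)
       * exp (ln (real K) * (u K (l + i) t - u K i t))"

end

theory Submission
  imports Defs
begin

text \<open>
  Put \<open>\<beta> = log K\<close> and \<open>w i = exp (\<beta> * u i)\<close>. The equation becomes the linear lattice system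
  \<open>w i' = \<beta> * R i * w i + (\<Sum>l. \<beta> * a i l * w (i + l))\<close> with nonnegative coefficients
  \<open>a i l = p ((i + l) * \<delta>) * h * G (l * h)\<close>. For such systems a comparison principle holds on
  the whole lattice without any growth condition at infinity: a supersolution lying above \<open>- V\<close>
  for a nonnegative supersolution \<open>V\<close> is nonnegative, as one sees by bootstrapping through the
  time-rescaled supersolutions \<open>V (t / \<theta>)\<close>.

  First, \<open>exp (\<beta> * M * t) * w i 0\<close> is a supersolution as soon as \<open>M\<close> bounds \<open>R\<close> plus the
  initial jump rate \<open>\<Sum>l. a i l * exp (\<beta> * (u (i + l) 0 - u i 0))\<close>, which is bounded uniformly
  in \<open>K\<close> because the initial slope \<open>L < 1\<close> is beaten by the decay \<open>exp (- \<bar>x\<bar>)\<close> of \<open>G\<close>.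
  So \<open>u i t \<le> u i 0 + M * t\<close>; as the system is autonomous, every \<open>u i\<close> grows at rate at most
  \<open>M\<close>, and the jump rate stays below \<open>M - inf R\<close> for all times. Second, a shift by one site
  changes \<open>a\<close> by a factor at most \<open>1 + O(\<delta>)\<close> and \<open>R\<close> by \<open>O(\<delta>)\<close>, so
  \<open>exp (\<beta> * (L * \<delta> + c * t)) * w i\<close> is a supersolution of the shifted system solved by
  \<open>w (i \<plusminus> 1)\<close>, and comparison gives \<open>\<bar>u (i + 1) t - u i t\<bar> \<le> \<delta> * (L + c * T)\<close>.
\<close>

lemma nondecreasing_of_deriv_nonneg_within:
  fixes f f' :: "real \<Rightarrow> real"
  assumes "a \<le> b" "{a..b} \<subseteq> S"
    and deriv: "\<And>x. x \<in> S \<Longrightarrow> (f has_real_derivative f' x) (at x within S)"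
    and nonneg: "\<And>x. x \<in> {a..b} \<Longrightarrow> 0 \<le> f' x"
  shows "f a \<le> f b"
proof -
  have "\<exists>x\<in>{a..b}. f b - f a = (\<lambda>h. f' x * h) (b - a)"
  proof (rule mvt_very_simple[OF \<open>a \<le> b\<close>])
    fix x assume "a \<le> x" "x \<le> b"
    then show "(f has_derivative (\<lambda>h. f' x * h)) (at x within {a..b})"
      using DERIV_subset[OF deriv \<open>{a..b} \<subseteq> S\<close>] \<open>{a..b} \<subseteq> S\<close>
      by (auto simp: has_field_derivative_def mult_commute_abs)
  qed
  then obtain x where "x \<in> {a..b}" "f b - f a = f' x * (b - a)" by auto
  moreover have "0 \<le> f' x * (b - a)" using nonneg[OF \<open>x \<in> {a..b}\<close>] \<open>a \<le> b\<close> by simp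
  ultimately show ?thesis by simp
qed

lemma nonneg_of_deriv_ge_linear:
  fixes f f' :: "real \<Rightarrow> real"
  assumes deriv: "\<And>x. x \<in> {0..c} \<Longrightarrow> (f has_real_derivative f' x) (at x within {0..c})"
    and ge: "\<And>x. x \<in> {0..c} \<Longrightarrow> r * f x \<le> f' x"
    and "0 \<le> f 0" "t \<in> {0..c}"
  shows "0 \<le> f t"
proof -
  have "exp (- r * 0) * f 0 \<le> exp (- r * t) * f t"
  proof (rule nondecreasing_of_deriv_nonneg_within[where f = "\<lambda>x. exp (- r * x) * f x" and S = "{0..c}"])
    show "((\<lambda>x. exp (- r * x) * f x) has_real_derivative exp (- r * x) * (f' x - r * f x))
        (at x within {0..c})" if "x \<in> {0..c}" for x
      by (rule derivative_eq_intros refl deriv[OF that] | simp add: algebra_simps)+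
  qed (use assms in auto)
  with \<open>0 \<le> f 0\<close> have "0 \<le> exp (- r * t) * f t" by simp
  then show ?thesis by (simp add: zero_le_mult_iff)
qed

lemma deriv_le_of_increments_le:
  fixes f :: "real \<Rightarrow> real"
  assumes "a < b" "t \<in> {a..b}"
    and deriv: "(f has_real_derivative f') (at t within {a..b})"
    and incr: "\<And>x y. a \<le> x \<Longrightarrow> x \<le> y \<Longrightarrow> y \<le> b \<Longrightarrow> f y - f x \<le> M * (y - x)"
  shows "f' \<le> M"
proof (rule tendsto_upperbound)
  show "((\<lambda>y. (f y - f t) / (y - t)) \<longlongrightarrow> f') (at t within {a..b})"
    using deriv by (simp add: has_field_derivative_iff)
  show "\<not> trivial_limit (at t within {a..b})"
    using assms by (simp add: trivial_limit_within)
  show "\<forall>\<^sub>F y in at t within {a..b}. (f y - f t) / (y - t) \<le> M"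
    unfolding eventually_at_filter
  proof (intro always_eventually allI impI)
    fix y assume "y \<noteq> t" "y \<in> {a..b}"
    then consider "t < y" | "y < t" by linarith
    then show "(f y - f t) / (y - t) \<le> M"
    proof cases
      case 1
      then show ?thesis using incr[of t y] \<open>t \<in> {a..b}\<close> \<open>y \<in> {a..b}\<close> by (simp add: divide_le_eq)
    next
      case 2
      then have "(f t - f y) / (t - y) \<le> M"
        using incr[of y t] \<open>t \<in> {a..b}\<close> \<open>y \<in> {a..b}\<close> by (simp add: divide_le_eq)
      moreover have "(f y - f t) / (y - t) = (f t - f y) / (t - y)"
        by (metis minus_diff_eq minus_divide_divide)
      ultimately show ?thesis by simp
    qed
  qed
qed

lemma le_mult_of_lipschitz_lower_bound:
  fixes p :: "real \<Rightarrow> real"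
  assumes lip: "lipschitz_on L UNIV p" and lower: "\<And>x. p\<^sub>0 \<le> p x" and "0 < p\<^sub>0"
  shows "p y \<le> (1 + L / p\<^sub>0 * \<bar>y - x\<bar>) * p x"
proof -
  have "p y - p x \<le> L * \<bar>y - x\<bar>"
    using lipschitz_onD[OF lip, of y x] by (simp add: dist_real_def)
  also have "\<dots> = L / p\<^sub>0 * \<bar>y - x\<bar> * p\<^sub>0"
    using \<open>0 < p\<^sub>0\<close> by simp
  also have "\<dots> \<le> L / p\<^sub>0 * \<bar>y - x\<bar> * p x"
    using lower[of x] lipschitz_on_nonneg[OF lip] \<open>0 < p\<^sub>0\<close> by (intro mult_left_mono) auto
  finally show ?thesis by (simp add: algebra_simps)
qed

lemma has_sum_geometric_int:
  fixes x :: real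
  assumes "0 \<le> x" "x < 1"
  shows "((\<lambda>l::int. x ^ nat \<bar>l\<bar>) has_sum (1 + x) / (1 - x)) UNIV"
proof -
  have "(\<lambda>n. x ^ n) sums (1 / (1 - x))" and "(\<lambda>n. x ^ Suc n) sums (x / (1 - x))"
    using geometric_sums[of x] sums_mult[OF geometric_sums[of x], of x] assms by auto
  then have nat_sums: "((\<lambda>n. x ^ n) has_sum 1 / (1 - x)) UNIV" "((\<lambda>n. x ^ Suc n) has_sum x / (1 - x)) UNIV"
    using assms by (auto intro!: sums_nonneg_imp_has_sum)
  have nonneg: "((\<lambda>l::int. x ^ nat \<bar>l\<bar>) has_sum 1 / (1 - x)) {0..}"
    using nat_sums(1) by (subst has_sum_reindex_bij_witness[where j = nat and i = int and T = UNIV]) auto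
  have neg: "((\<lambda>l::int. x ^ nat \<bar>l\<bar>) has_sum x / (1 - x)) {..<0}"
  proof (subst has_sum_reindex_bij_witness[where j = "\<lambda>l. nat (- l - 1)" and i = "\<lambda>n. - int n - 1" and T = UNIV])
    show "x ^ Suc (nat (- l - 1)) = x ^ nat \<bar>l\<bar>" if "l \<in> {..<0}" for l :: int
      using that by (simp add: Suc_nat_eq_nat_zadd1)
  qed (use nat_sums(2) in auto)
  have "((\<lambda>l::int. x ^ nat \<bar>l\<bar>) has_sum 1 / (1 - x) + x / (1 - x)) ({0..} \<union> {..<0})"
    by (rule has_sum_Un_disjoint[OF nonneg neg]) auto
  moreover have "{0..} \<union> {..<0} = (UNIV :: int set)" by auto
  ultimately show ?thesis by (simp add: add_divide_distrib)
qed

lemma geometric_factor_le: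
  fixes h \<gamma> :: real
  assumes "0 < h" "0 < \<gamma>" "\<gamma> \<le> 1"
  shows "h * (1 + exp (- (\<gamma> * h))) / (1 - exp (- (\<gamma> * h))) \<le> 2 * (1 + h) / \<gamma>"
proof -
  let ?x = "exp (- (\<gamma> * h))"
  have y: "0 < \<gamma> * h" using assms by simp
  have "?x \<le> 1 / (1 + \<gamma> * h)"
    using exp_ge_add_one_self[of "\<gamma> * h"] y by (simp add: exp_minus field_simps)
  then have gap: "\<gamma> * h / (1 + \<gamma> * h) \<le> 1 - ?x"
    using y by (simp add: field_simps)
  have "h * (1 + ?x) / (1 - ?x) \<le> (2 * h) / (\<gamma> * h / (1 + \<gamma> * h))"
  proof (rule frac_le)
    show "0 < \<gamma> * h / (1 + \<gamma> * h)"
      using y by (intro divide_pos_pos) auto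
    show "h * (1 + ?x) \<le> 2 * h"
      using y \<open>0 < h\<close> by simp
  qed (use gap \<open>0 < h\<close> in auto)
  also have "\<dots> = 2 * (1 + \<gamma> * h) / \<gamma>"
    using assms by (simp add: field_simps)
  also have "\<dots> \<le> 2 * (1 + h) / \<gamma>"
    using assms by (intro divide_right_mono) (auto simp: mult_left_le_one_le)
  finally show ?thesis .
qed

lemma kernel_exp_moment_le:
  fixes a V :: "int \<Rightarrow> real"
  assumes "0 < h" "0 < L" "L < 1" "0 \<le> C"
    and a_le: "\<And>l. a l \<le> C * h * exp (- (\<bar>real_of_int l\<bar> * h))"
    and V_le: "\<And>l. V l \<le> L * h * \<bar>real_of_int l\<bar>"
    and summable: "(\<lambda>l. a l * exp (V l)) summable_on UNIV"
  shows "(\<Sum>\<^sub>\<infinity>l. a l * exp (V l)) \<le> 2 * C * (1 + h) / (1 - L)"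
proof -
  define x where "x = exp (- ((1 - L) * h))"
  have x: "0 \<le> x" "x < 1" unfolding x_def using assms by auto
  have term_le: "a l * exp (V l) \<le> C * h * x ^ nat \<bar>l\<bar>" for l
  proof -
    have "a l * exp (V l) \<le> C * h * exp (- (\<bar>real_of_int l\<bar> * h)) * exp (L * h * \<bar>real_of_int l\<bar>)"
      using assms by (intro mult_mono a_le) auto
    also have "\<dots> = C * h * exp (- ((1 - L) * h) * real (nat \<bar>l\<bar>))"
      by (simp add: algebra_simps flip: exp_add)
    finally show ?thesis
      unfolding x_def by (simp add: exp_of_nat_mult[symmetric] mult.commute)
  qed
  have geometric: "((\<lambda>l. C * h * x ^ nat \<bar>l\<bar>) has_sum C * h * ((1 + x) / (1 - x))) UNIV"
    by (rule has_sum_cmult_right[OF has_sum_geometric_int[OF x]])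
  have "(\<Sum>\<^sub>\<infinity>l. a l * exp (V l)) \<le> C * h * ((1 + x) / (1 - x))"
    using infsum_mono[OF summable _ term_le] geometric by (simp add: has_sum_iff)
  also have "\<dots> = C * (h * (1 + x) / (1 - x))" by simp
  also have "\<dots> \<le> C * (2 * (1 + h) / (1 - L))"
    unfolding x_def using assms by (intro mult_left_mono geometric_factor_le) auto
  finally show ?thesis by (simp add: algebra_simps)
qed

lemma abs_diff_le_of_unit_steps:
  fixes f :: "int \<Rightarrow> real"
  assumes step: "\<And>i. \<bar>f (i + 1) - f i\<bar> \<le> c"
  shows "\<bar>f (i + l) - f i\<bar> \<le> c * \<bar>l\<bar>"
proof -
  have forward: "\<bar>f (j + int n) - f j\<bar> \<le> c * n" for j n
  proof (induction n)
    case (Suc n)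
    have "\<bar>f (j + int n + 1) - f (j + int n)\<bar> \<le> c" by (rule step)
    with Suc show ?case by (simp add: algebra_simps)
  qed simp
  show ?thesis
  proof (cases "0 \<le> l")
    case True
    then show ?thesis using forward[of i "nat l"] by simp
  next
    case False
    then show ?thesis using forward[of "i + l" "nat (- l)"] by (simp add: abs_minus_commute)
  qed
qed

section \<open>Linear lattice systems and the comparison principle\<close>

definition lattice_solution ::
  "real \<Rightarrow> (int \<Rightarrow> real) \<Rightarrow> (int \<Rightarrow> int \<Rightarrow> real) \<Rightarrow> (int \<Rightarrow> real \<Rightarrow> real) \<Rightarrow> bool" where
  "lattice_solution T r k D \<longleftrightarrow>
     (\<forall>i. \<forall>t\<in>{0..T}. (\<lambda>l. k i l * D (i + l) t) summable_on UNIV \<and>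
        (D i has_real_derivative r i * D i t + (\<Sum>\<^sub>\<infinity>l. k i l * D (i + l) t)) (at t within {0..T}))"

definition lattice_supersolution ::
  "real \<Rightarrow> (int \<Rightarrow> real) \<Rightarrow> (int \<Rightarrow> int \<Rightarrow> real) \<Rightarrow> (int \<Rightarrow> real \<Rightarrow> real) \<Rightarrow> bool" where
  "lattice_supersolution T r k D \<longleftrightarrow>
     (\<forall>i. \<forall>t\<in>{0..T}. (\<lambda>l. k i l * D (i + l) t) summable_on UNIV \<and>
        (\<exists>D'. (D i has_real_derivative D') (at t within {0..T}) \<and>
              r i * D i t + (\<Sum>\<^sub>\<infinity>l. k i l * D (i + l) t) \<le> D'))"

lemma lattice_supersolutionI:
  assumes "\<And>i t. t \<in> {0..T} \<Longrightarrow> (\<lambda>l. k i l * D (i + l) t) summable_on UNIV"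
    and "\<And>i t. t \<in> {0..T} \<Longrightarrow> (D i has_real_derivative D' i t) (at t within {0..T})"
    and "\<And>i t. t \<in> {0..T} \<Longrightarrow> r i * D i t + (\<Sum>\<^sub>\<infinity>l. k i l * D (i + l) t) \<le> D' i t"
  shows "lattice_supersolution T r k D"
  using assms unfolding lattice_supersolution_def by blast

lemma lattice_supersolution_summable:
  "lattice_supersolution T r k D \<Longrightarrow> t \<in> {0..T} \<Longrightarrow> (\<lambda>l. k i l * D (i + l) t) summable_on UNIV"
  unfolding lattice_supersolution_def by blast

lemma lattice_supersolution_derivE:
  assumes "lattice_supersolution T r k D"
  obtains D' where
    "\<And>i t. t \<in> {0..T} \<Longrightarrow> (D i has_real_derivative D' i t) (at t within {0..T})"
    "\<And>i t. t \<in> {0..T} \<Longrightarrow> r i * D i t + (\<Sum>\<^sub>\<infinity>l. k i l * D (i + l) t) \<le> D' i t"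
proof -
  let ?P = "\<lambda>i t d. (D i has_real_derivative d) (at t within {0..T}) \<and>
              r i * D i t + (\<Sum>\<^sub>\<infinity>l. k i l * D (i + l) t) \<le> d"
  have "?P i t (SOME d. ?P i t d)" if "t \<in> {0..T}" for i t
    by (rule someI_ex) (use assms that in \<open>unfold lattice_supersolution_def, blast\<close>)
  then show ?thesis
    using that[of "\<lambda>i t. SOME d. ?P i t d"] by blast
qed

lemma lattice_solution_imp_supersolution:
  "lattice_solution T r k D \<Longrightarrow> lattice_supersolution T r k D"
  unfolding lattice_solution_def lattice_supersolution_def by blast

lemma lattice_solution_restrict:
  assumes "lattice_solution T r k D" "T' \<le> T"
  shows "lattice_solution T' r k D"
  unfolding lattice_solution_def
proof (intro allI ballI conjI)
  fix i t assume "t \<in> {0..T'}"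
  moreover have sub: "{0..T'} \<subseteq> {0..T}" using \<open>T' \<le> T\<close> by auto
  ultimately show "(\<lambda>l. k i l * D (i + l) t) summable_on UNIV"
    and "(D i has_real_derivative r i * D i t + (\<Sum>\<^sub>\<infinity>l. k i l * D (i + l) t)) (at t within {0..T'})"
    using assms(1) unfolding lattice_solution_def by (blast intro: DERIV_subset[OF _ sub])+
qed

lemma lattice_solution_time_shift:
  assumes "lattice_solution (T + s) r k D" "0 \<le> s"
  shows "lattice_solution T r k (\<lambda>i t. D i (t + s))"
  unfolding lattice_solution_def
proof (intro allI ballI conjI)
  fix i t assume t: "t \<in> {0..T}"
  with \<open>0 \<le> s\<close> have ts: "t + s \<in> {0..T + s}" by auto
  with assms(1) show "(\<lambda>l. k i l * D (i + l) (t + s)) summable_on UNIV"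
    unfolding lattice_solution_def by blast
  have img: "(\<lambda>t. t + s) ` {0..T} \<subseteq> {0..T + s}" using \<open>0 \<le> s\<close> by auto
  have "(D i has_real_derivative r i * D i (t + s) + (\<Sum>\<^sub>\<infinity>l. k i l * D (i + l) (t + s)))
      (at (t + s) within {0..T + s})"
    using assms(1) ts unfolding lattice_solution_def by blast
  then have outer: "(D i has_real_derivative r i * D i (t + s) + (\<Sum>\<^sub>\<infinity>l. k i l * D (i + l) (t + s)))
      (at (t + s) within (\<lambda>t. t + s) ` {0..T})"
    by (rule DERIV_subset[OF _ img])
  have inner: "((\<lambda>t. t + s) has_real_derivative 1) (at t within {0..T})"
    by (auto intro!: derivative_eq_intros)
  from DERIV_image_chain[OF outer inner]
  show "((\<lambda>t. D i (t + s)) has_real_derivative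
      r i * D i (t + s) + (\<Sum>\<^sub>\<infinity>l. k i l * D (i + l) (t + s))) (at t within {0..T})"
    by (simp add: o_def)
qed

lemma lattice_solution_scale:
  assumes "lattice_solution T r k D"
  shows "lattice_solution T r k (\<lambda>i t. c * D i t)"
  unfolding lattice_solution_def
proof (intro allI ballI conjI)
  fix i t assume t: "t \<in> {0..T}"
  then have sum: "(\<lambda>l. k i l * D (i + l) t) summable_on UNIV"
    and deriv: "(D i has_real_derivative r i * D i t + (\<Sum>\<^sub>\<infinity>l. k i l * D (i + l) t)) (at t within {0..T})"
    using assms unfolding lattice_solution_def by blast+
  then show "(\<lambda>l. k i l * (c * D (i + l) t)) summable_on UNIV"
    using summable_on_cmult_right[OF sum, of c] by (simp add: algebra_simps)
  have scaled_sum: "(\<Sum>\<^sub>\<infinity>l. k i l * (c * D (i + l) t)) = c * (\<Sum>\<^sub>\<infinity>l. k i l * D (i + l) t)"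
    using infsum_cmult_right[OF sum, of c] by (simp add: mult.left_commute)
  show "((\<lambda>t. c * D i t) has_real_derivative
      r i * (c * D i t) + (\<Sum>\<^sub>\<infinity>l. k i l * (c * D (i + l) t))) (at t within {0..T})"
    unfolding scaled_sum by (rule DERIV_cong[OF DERIV_cmult[OF deriv]]) (simp add: algebra_simps)
qed

lemma lattice_supersolution_exp_weight:
  assumes "lattice_supersolution T r k D"
  shows "lattice_supersolution T (\<lambda>i. r i + \<rho>) k (\<lambda>i t. exp (\<rho> * t) * D i t)"
proof -
  obtain D' where deriv: "\<And>i t. t \<in> {0..T} \<Longrightarrow> (D i has_real_derivative D' i t) (at t within {0..T})"
    and ge: "\<And>i t. t \<in> {0..T} \<Longrightarrow> r i * D i t + (\<Sum>\<^sub>\<infinity>l. k i l * D (i + l) t) \<le> D' i t"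
    by (rule lattice_supersolution_derivE[OF assms], rule that)
  note sum = lattice_supersolution_summable[OF assms]
  have weighted: "(\<lambda>l. k i l * (exp (\<rho> * t) * D (i + l) t)) = (\<lambda>l. exp (\<rho> * t) * (k i l * D (i + l) t))"
    for i t by (simp add: algebra_simps)
  show ?thesis
  proof (rule lattice_supersolutionI)
    fix i t assume t: "t \<in> {0..T}"
    show "(\<lambda>l. k i l * (exp (\<rho> * t) * D (i + l) t)) summable_on UNIV"
      unfolding weighted by (rule summable_on_cmult_right[OF sum[OF t]])
    show "((\<lambda>t. exp (\<rho> * t) * D i t) has_real_derivative exp (\<rho> * t) * (\<rho> * D i t + D' i t))
        (at t within {0..T})"
    proof (rule DERIV_cong[OF DERIV_mult[OF _ deriv[OF t]]])
      show "((\<lambda>t. exp (\<rho> * t)) has_real_derivative exp (\<rho> * t) * \<rho>) (at t within {0..T})"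
        by (auto intro!: derivative_eq_intros)
    qed (simp add: algebra_simps)
    let ?e = "exp (\<rho> * t)" and ?S = "\<Sum>\<^sub>\<infinity>l. k i l * D (i + l) t"
    have "(r i + \<rho>) * (?e * D i t) + ?e * ?S = ?e * (r i * D i t + ?S) + \<rho> * (?e * D i t)"
      by (simp add: algebra_simps)
    also have "\<dots> \<le> ?e * D' i t + \<rho> * (?e * D i t)"
      using ge[OF t, of i] by simp
    also have "\<dots> = ?e * (\<rho> * D i t + D' i t)"
      by (simp add: algebra_simps)
    finally show "(r i + \<rho>) * (?e * D i t) + (\<Sum>\<^sub>\<infinity>l. k i l * (?e * D (i + l) t))
        \<le> ?e * (\<rho> * D i t + D' i t)"
      unfolding weighted infsum_cmult_right[OF sum[OF t]] .
  qed
qed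

lemma lattice_supersolution_diff:
  assumes "lattice_supersolution T r k Z" "lattice_solution T r k W"
  shows "lattice_supersolution T r k (\<lambda>i t. Z i t - W i t)"
proof -
  obtain Z' where derivZ: "\<And>i t. t \<in> {0..T} \<Longrightarrow> (Z i has_real_derivative Z' i t) (at t within {0..T})"
    and geZ: "\<And>i t. t \<in> {0..T} \<Longrightarrow> r i * Z i t + (\<Sum>\<^sub>\<infinity>l. k i l * Z (i + l) t) \<le> Z' i t"
    by (rule lattice_supersolution_derivE[OF assms(1)], rule that)
  note sumZ = lattice_supersolution_summable[OF assms(1)]
  have sumW: "(\<lambda>l. k i l * W (i + l) t) summable_on UNIV"
    and derivW: "(W i has_real_derivative r i * W i t + (\<Sum>\<^sub>\<infinity>l. k i l * W (i + l) t)) (at t within {0..T})"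
    if "t \<in> {0..T}" for i t
    using assms(2) that unfolding lattice_solution_def by blast+
  have diff_terms: "(\<lambda>l. k i l * (Z (i + l) t - W (i + l) t)) = (\<lambda>l. k i l * Z (i + l) t + - (k i l * W (i + l) t))"
    for i t by (simp add: algebra_simps)
  show ?thesis
  proof (rule lattice_supersolutionI)
    fix i t assume t: "t \<in> {0..T}"
    have sum_neg: "(\<lambda>l. - (k i l * W (i + l) t)) summable_on UNIV"
      using sumW[OF t] by (simp add: summable_on_uminus)
    show "(\<lambda>l. k i l * (Z (i + l) t - W (i + l) t)) summable_on UNIV"
      unfolding diff_terms by (rule summable_on_add[OF sumZ[OF t] sum_neg])
    show "((\<lambda>t. Z i t - W i t) has_real_derivative
        Z' i t - (r i * W i t + (\<Sum>\<^sub>\<infinity>l. k i l * W (i + l) t))) (at t within {0..T})"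
      by (rule DERIV_diff[OF derivZ[OF t] derivW[OF t]])
    have "(\<Sum>\<^sub>\<infinity>l. k i l * (Z (i + l) t - W (i + l) t))
        = (\<Sum>\<^sub>\<infinity>l. k i l * Z (i + l) t) - (\<Sum>\<^sub>\<infinity>l. k i l * W (i + l) t)"
      unfolding diff_terms infsum_add[OF sumZ[OF t] sum_neg] infsum_uminus by simp
    then have "r i * (Z i t - W i t) + (\<Sum>\<^sub>\<infinity>l. k i l * (Z (i + l) t - W (i + l) t))
        = (r i * Z i t + (\<Sum>\<^sub>\<infinity>l. k i l * Z (i + l) t)) - (r i * W i t + (\<Sum>\<^sub>\<infinity>l. k i l * W (i + l) t))"
      by (simp add: right_diff_distrib)
    also have "\<dots> \<le> Z' i t - (r i * W i t + (\<Sum>\<^sub>\<infinity>l. k i l * W (i + l) t))"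
      using geZ[OF t] by (rule diff_right_mono)
    finally show "r i * (Z i t - W i t) + (\<Sum>\<^sub>\<infinity>l. k i l * (Z (i + l) t - W (i + l) t))
        \<le> Z' i t - (r i * W i t + (\<Sum>\<^sub>\<infinity>l. k i l * W (i + l) t))" .
  qed
qed

lemma lattice_supersolution_nondecreasing:
  assumes V: "lattice_supersolution T r k V"
    and r: "\<And>i. 0 \<le> r i" and k: "\<And>i l. 0 \<le> k i l"
    and V_nonneg: "\<And>i t. t \<in> {0..T} \<Longrightarrow> 0 \<le> V i t"
    and "0 \<le> s" "s \<le> t" "t \<le> T"
  shows "V i s \<le> V i t"
proof -
  obtain V' where deriv: "\<And>i t. t \<in> {0..T} \<Longrightarrow> (V i has_real_derivative V' i t) (at t within {0..T})"
    and ge: "\<And>i t. t \<in> {0..T} \<Longrightarrow> r i * V i t + (\<Sum>\<^sub>\<infinity>l. k i l * V (i + l) t) \<le> V' i t"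
    by (rule lattice_supersolution_derivE[OF V], rule that)
  have "0 \<le> V' i x" if x: "x \<in> {0..T}" for x
  proof -
    have "0 \<le> r i * V i x + (\<Sum>\<^sub>\<infinity>l. k i l * V (i + l) x)"
      using r k V_nonneg x by (intro add_nonneg_nonneg mult_nonneg_nonneg infsum_nonneg) auto
    also have "\<dots> \<le> V' i x" by (rule ge[OF x])
    finally show ?thesis .
  qed
  then show ?thesis
    by (intro nondecreasing_of_deriv_nonneg_within[where S = "{0..T}", OF \<open>s \<le> t\<close> _ deriv])
      (use \<open>0 \<le> s\<close> \<open>t \<le> T\<close> in auto)
qed

lemma lattice_supersolution_time_rescale:
  assumes V: "lattice_supersolution T r k V" and "0 < \<theta>"
  shows "lattice_supersolution (\<theta> * T) (\<lambda>i. r i / \<theta>) (\<lambda>i l. k i l / \<theta>) (\<lambda>i x. V i (x / \<theta>))"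
proof -
  obtain V' where deriv: "\<And>i t. t \<in> {0..T} \<Longrightarrow> (V i has_real_derivative V' i t) (at t within {0..T})"
    and ge: "\<And>i t. t \<in> {0..T} \<Longrightarrow> r i * V i t + (\<Sum>\<^sub>\<infinity>l. k i l * V (i + l) t) \<le> V' i t"
    by (rule lattice_supersolution_derivE[OF V], rule that)
  note sum = lattice_supersolution_summable[OF V]
  have img: "(\<lambda>x. x / \<theta>) ` {0..\<theta> * T} = {0..T}"
    using \<open>0 < \<theta>\<close> by simp
  show ?thesis
  proof (rule lattice_supersolutionI)
    fix i x assume x: "x \<in> {0..\<theta> * T}"
    then have x': "x / \<theta> \<in> {0..T}" using img by blast
    have hs: "((\<lambda>l. k i l / \<theta> * V (i + l) (x / \<theta>)) has_sum
        (\<Sum>\<^sub>\<infinity>l. k i l * V (i + l) (x / \<theta>)) / \<theta>) UNIV"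
      using has_sum_divide_const[OF has_sum_infsum[OF sum[OF x']], where c = \<theta>] by simp
    then show "(\<lambda>l. k i l / \<theta> * V (i + l) (x / \<theta>)) summable_on UNIV"
      by (simp add: has_sum_iff)
    have outer: "(V i has_real_derivative V' i (x / \<theta>)) (at (x / \<theta>) within (\<lambda>x. x / \<theta>) ` {0..\<theta> * T})"
      unfolding img by (rule deriv[OF x'])
    have inner: "((\<lambda>x. x / \<theta>) has_real_derivative 1 / \<theta>) (at x within {0..\<theta> * T})"
      using DERIV_cdivide[OF DERIV_ident, where c = \<theta>] by simp
    from DERIV_image_chain[OF outer inner]
    show "((\<lambda>x. V i (x / \<theta>)) has_real_derivative V' i (x / \<theta>) * (1 / \<theta>))
        (at x within {0..\<theta> * T})"
      by (simp add: o_def)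
    have "r i / \<theta> * V i (x / \<theta>) + (\<Sum>\<^sub>\<infinity>l. k i l * V (i + l) (x / \<theta>)) / \<theta>
        = (r i * V i (x / \<theta>) + (\<Sum>\<^sub>\<infinity>l. k i l * V (i + l) (x / \<theta>))) / \<theta>"
      by (simp only: add_divide_distrib times_divide_eq_left)
    also have "\<dots> \<le> V' i (x / \<theta>) / \<theta>"
      using ge[OF x'] \<open>0 < \<theta>\<close> by (simp add: divide_right_mono)
    finally show "r i / \<theta> * V i (x / \<theta>) + (\<Sum>\<^sub>\<infinity>l. k i l / \<theta> * V (i + l) (x / \<theta>))
        \<le> V' i (x / \<theta>) * (1 / \<theta>)"
      unfolding infsumI[OF hs] by simp
  qed
qed

lemma bootstrap_step_rate_le:
  fixes d y :: "int \<Rightarrow> real"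
  assumes r: "0 \<le> r" and k: "\<And>l. 0 \<le> k l" and \<theta>: "0 < \<theta>" "\<theta> < 1" and "0 \<le> y\<^sub>0"
    and sum_d: "(\<lambda>l. k l * d l) summable_on UNIV"
    and sum_y: "(\<lambda>l. k l / \<theta> * y l) summable_on UNIV"
    and ge_d: "r * d\<^sub>0 + (\<Sum>\<^sub>\<infinity>l. k l * d l) \<le> d'"
    and ge_y: "r / \<theta> * y\<^sub>0 + (\<Sum>\<^sub>\<infinity>l. k l / \<theta> * y l) \<le> y'"
    and prev: "\<And>l. - (\<theta> ^ n * y l) \<le> d l"
  shows "r * (d\<^sub>0 + \<theta> ^ Suc n * y\<^sub>0) \<le> d' + \<theta> ^ Suc n * y'"
proof -
  have pow_div: "\<theta> ^ Suc n * (a / \<theta> * b) = \<theta> ^ n * (a * b)" for a b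
    using \<theta> by simp
  have "0 \<le> (\<Sum>\<^sub>\<infinity>l. k l * d l + \<theta> ^ Suc n * (k l / \<theta> * y l))"
  proof (rule infsum_nonneg)
    fix l
    have "0 \<le> k l * (d l + \<theta> ^ n * y l)"
      using prev[of l] k[of l] by simp
    then show "0 \<le> k l * d l + \<theta> ^ Suc n * (k l / \<theta> * y l)"
      unfolding pow_div by (simp only: distrib_left mult.left_commute)
  qed
  also have "\<dots> = (\<Sum>\<^sub>\<infinity>l. k l * d l) + \<theta> ^ Suc n * (\<Sum>\<^sub>\<infinity>l. k l / \<theta> * y l)"
    unfolding infsum_add[OF sum_d summable_on_cmult_right[OF sum_y]] infsum_cmult_right[OF sum_y] ..
  finally have sums_nonneg: "0 \<le> \<dots>" .
  have "0 \<le> \<theta> ^ n * (r * y\<^sub>0)"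
    using \<theta> r \<open>0 \<le> y\<^sub>0\<close> by simp
  from mult_left_le_one_le[OF this, of \<theta>] \<theta>
  have rate_mono: "r * (\<theta> ^ Suc n * y\<^sub>0) \<le> \<theta> ^ Suc n * (r / \<theta> * y\<^sub>0)"
    unfolding pow_div by (simp add: mult_ac)
  have "\<theta> ^ Suc n * (r / \<theta> * y\<^sub>0 + (\<Sum>\<^sub>\<infinity>l. k l / \<theta> * y l)) \<le> \<theta> ^ Suc n * y'"
    using ge_y \<theta> by (intro mult_left_mono) auto
  then show ?thesis
    using ge_d sums_nonneg rate_mono unfolding distrib_left by linarith
qed

text \<open>
  The time-rescaled supersolution \<open>V i (t / \<theta>)\<close> has the larger rates \<open>r / \<theta>\<close>, which pays
  for one more factor \<open>\<theta>\<close> in the lower bound at each step.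
\<close>
lemma lattice_supersolution_ge_rescaled:
  assumes D: "lattice_supersolution T r k D" and V: "lattice_supersolution T r k V"
    and r: "\<And>i. 0 \<le> r i" and k: "\<And>i l. 0 \<le> k i l"
    and V_nonneg: "\<And>i t. t \<in> {0..T} \<Longrightarrow> 0 \<le> V i t"
    and D_init: "\<And>i. 0 \<le> D i 0"
    and D_ge: "\<And>i t. t \<in> {0..T} \<Longrightarrow> - V i t \<le> D i t"
    and \<theta>: "0 < \<theta>" "\<theta> < 1"
  shows "t \<in> {0..\<theta> * T} \<Longrightarrow> - (\<theta> ^ n * V i (t / \<theta>)) \<le> D i t"
proof (induction n arbitrary: i t)
  case 0
  then have "0 \<le> t" "t \<le> t / \<theta>" "t / \<theta> \<le> T"
    using \<theta> by (auto simp: field_simps mult_left_le_one_le)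
  then have "V i t \<le> V i (t / \<theta>)"
    using lattice_supersolution_nondecreasing[OF V r k V_nonneg] by blast
  moreover have "- V i t \<le> D i t"
    using D_ge \<open>0 \<le> t\<close> \<open>t \<le> t / \<theta>\<close> \<open>t / \<theta> \<le> T\<close> by simp
  ultimately show ?case by simp
next
  case (Suc n)
  let ?V\<theta> = "\<lambda>i x. V i (x / \<theta>)"
  have "0 \<le> \<theta> * T"
    using Suc.prems by simp
  with \<theta> have "0 \<le> T"
    by (simp add: zero_le_mult_iff)
  then have sub: "{0..\<theta> * T} \<subseteq> {0..T}"
    using mult_left_le_one_le[of T \<theta>] \<theta> by auto
  have V\<theta>: "lattice_supersolution (\<theta> * T) (\<lambda>i. r i / \<theta>) (\<lambda>i l. k i l / \<theta>) ?V\<theta>"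
    using V \<open>0 < \<theta>\<close> by (rule lattice_supersolution_time_rescale)
  obtain D' where derivD: "\<And>i t. t \<in> {0..T} \<Longrightarrow> (D i has_real_derivative D' i t) (at t within {0..T})"
    and geD: "\<And>i t. t \<in> {0..T} \<Longrightarrow> r i * D i t + (\<Sum>\<^sub>\<infinity>l. k i l * D (i + l) t) \<le> D' i t"
    by (rule lattice_supersolution_derivE[OF D], rule that)
  obtain V' where derivV: "\<And>i x. x \<in> {0..\<theta> * T} \<Longrightarrow>
      (?V\<theta> i has_real_derivative V' i x) (at x within {0..\<theta> * T})"
    and geV: "\<And>i x. x \<in> {0..\<theta> * T} \<Longrightarrow>
      r i / \<theta> * ?V\<theta> i x + (\<Sum>\<^sub>\<infinity>l. k i l / \<theta> * ?V\<theta> (i + l) x) \<le> V' i x"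
    by (rule lattice_supersolution_derivE[OF V\<theta>], rule that)
  let ?F = "\<lambda>x. D i x + \<theta> ^ Suc n * ?V\<theta> i x"
  have "0 \<le> ?F t"
  proof (rule nonneg_of_deriv_ge_linear[where f = ?F and c = "\<theta> * T" and r = "r i"])
    show "(?F has_real_derivative D' i x + \<theta> ^ Suc n * V' i x) (at x within {0..\<theta> * T})"
      if x: "x \<in> {0..\<theta> * T}" for x
      using DERIV_subset[OF derivD sub] x sub by (intro DERIV_add DERIV_cmult derivV[OF x]) blast
    show "r i * ?F x \<le> D' i x + \<theta> ^ Suc n * V' i x" if x: "x \<in> {0..\<theta> * T}" for x
    proof (rule bootstrap_step_rate_le[OF r k \<theta>])
      have "x \<in> {0..T}" "x / \<theta> \<in> {0..T}"
        using x sub \<theta> by (auto simp: divide_le_eq mult.commute)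
      then show "0 \<le> ?V\<theta> i x" "(\<lambda>l. k i l * D (i + l) x) summable_on UNIV"
        "r i * D i x + (\<Sum>\<^sub>\<infinity>l. k i l * D (i + l) x) \<le> D' i x"
        using V_nonneg lattice_supersolution_summable[OF D] geD by blast+
    qed (use lattice_supersolution_summable[OF V\<theta> x] geV[OF x] Suc.IH[OF x] in auto)
    show "0 \<le> ?F 0"
      using D_init[of i] V_nonneg[of 0 i] \<open>0 \<le> T\<close> \<theta> by simp
  qed (rule Suc.prems)
  then show ?case by linarith
qed

lemma lattice_supersolution_continuous_on:
  assumes "lattice_supersolution T r k D"
  shows "continuous_on {0..T} (D i)"
proof -
  obtain D' where "\<And>i t. t \<in> {0..T} \<Longrightarrow> (D i has_real_derivative D' i t) (at t within {0..T})"
    and "\<And>i t. t \<in> {0..T} \<Longrightarrow> r i * D i t + (\<Sum>\<^sub>\<infinity>l. k i l * D (i + l) t) \<le> D' i t"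
    by (rule lattice_supersolution_derivE[OF assms], rule that)
  then show ?thesis by (intro DERIV_continuous_on)
qed

lemma lattice_supersolution_nonneg_before_end:
  assumes D: "lattice_supersolution T r k D" and V: "lattice_supersolution T r k V"
    and r: "\<And>i. 0 \<le> r i" and k: "\<And>i l. 0 \<le> k i l"
    and V_nonneg: "\<And>i t. t \<in> {0..T} \<Longrightarrow> 0 \<le> V i t"
    and D_init: "\<And>i. 0 \<le> D i 0"
    and D_ge: "\<And>i t. t \<in> {0..T} \<Longrightarrow> - V i t \<le> D i t"
    and x: "0 \<le> x" "x < T"
  shows "0 \<le> D i x"
proof -
  define \<theta> where "\<theta> = (x / T + 1) / 2"
  have \<theta>: "0 < \<theta>" "\<theta> < 1" and x\<theta>: "x \<in> {0..\<theta> * T}" "x / \<theta> \<le> T"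
    using x by (auto simp: \<theta>_def field_simps)
  have "- (\<theta> ^ n * V i T) \<le> D i x" for n
  proof -
    have "V i (x / \<theta>) \<le> V i T"
      using lattice_supersolution_nondecreasing[OF V r k V_nonneg] x x\<theta> \<theta> by simp
    then have "\<theta> ^ n * V i (x / \<theta>) \<le> \<theta> ^ n * V i T"
      using \<theta> by (simp add: mult_left_mono)
    moreover have "- (\<theta> ^ n * V i (x / \<theta>)) \<le> D i x"
      by (rule lattice_supersolution_ge_rescaled[OF D V r k V_nonneg D_init D_ge]) (use \<theta> x\<theta> in auto)
    ultimately show ?thesis by linarith
  qed
  moreover have "(\<lambda>n. - (\<theta> ^ n * V i T)) \<longlonglongrightarrow> - (0 * V i T)"
    using \<theta> by (intro tendsto_intros LIMSEQ_power_zero) auto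
  ultimately show ?thesis
    by (intro LIMSEQ_le_const2) auto
qed

lemma lattice_supersolution_nonneg_of_nonneg_rates:
  assumes D: "lattice_supersolution T r k D" and V: "lattice_supersolution T r k V"
    and r: "\<And>i. 0 \<le> r i" and k: "\<And>i l. 0 \<le> k i l"
    and V_nonneg: "\<And>i t. t \<in> {0..T} \<Longrightarrow> 0 \<le> V i t"
    and D_init: "\<And>i. 0 \<le> D i 0"
    and D_ge: "\<And>i t. t \<in> {0..T} \<Longrightarrow> - V i t \<le> D i t"
    and t: "t \<in> {0..T}"
  shows "0 \<le> D i t"
proof -
  note before_end = lattice_supersolution_nonneg_before_end[OF D V r k V_nonneg D_init D_ge]
  consider "t < T" | "t = 0" | "t = T" "0 < T"
    using t by fastforce
  then show ?thesis
  proof cases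
    case 3
    have "(D i \<longlongrightarrow> D i T) (at_left T)"
      using lattice_supersolution_continuous_on[OF D] \<open>0 < T\<close> by (rule continuous_on_Icc_at_leftD)
    moreover have "\<forall>\<^sub>F x in at_left T. 0 \<le> D i x"
      using eventually_at_left_real[OF \<open>0 < T\<close>] by eventually_elim (use before_end in auto)
    ultimately have "0 \<le> D i T"
      by (rule tendsto_lowerbound) simp
    with \<open>t = T\<close> show ?thesis by simp
  qed (use before_end t D_init in auto)
qed

lemma lattice_supersolution_nonneg:
  assumes D: "lattice_supersolution T r k D" and V: "lattice_supersolution T r k V"
    and r: "bdd_below (range r)" and k: "\<And>i l. 0 \<le> k i l"
    and V_nonneg: "\<And>i t. t \<in> {0..T} \<Longrightarrow> 0 \<le> V i t"
    and D_init: "\<And>i. 0 \<le> D i 0"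
    and D_ge: "\<And>i t. t \<in> {0..T} \<Longrightarrow> - V i t \<le> D i t"
    and t: "t \<in> {0..T}"
  shows "0 \<le> D i t"
proof -
  obtain \<rho> where \<rho>: "\<And>i. 0 \<le> r i + \<rho>"
  proof -
    from r obtain m where "\<And>i. m \<le> r i" by (auto simp: bdd_below_def)
    then show thesis by (intro that[of "- m"]) simp
  qed
  have "0 \<le> exp (\<rho> * t) * D i t"
  proof (rule lattice_supersolution_nonneg_of_nonneg_rates[where D = "\<lambda>i t. exp (\<rho> * t) * D i t"
        and V = "\<lambda>i t. exp (\<rho> * t) * V i t" and r = "\<lambda>i. r i + \<rho>"])
    show "lattice_supersolution T (\<lambda>i. r i + \<rho>) k (\<lambda>i t. exp (\<rho> * t) * D i t)"
      using D by (rule lattice_supersolution_exp_weight)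
    show "lattice_supersolution T (\<lambda>i. r i + \<rho>) k (\<lambda>i t. exp (\<rho> * t) * V i t)"
      using V by (rule lattice_supersolution_exp_weight)
    show "- (exp (\<rho> * s) * V i s) \<le> exp (\<rho> * s) * D i s" if "s \<in> {0..T}" for i s
      using mult_left_mono[OF D_ge[OF that, of i], of "exp (\<rho> * s)"] by simp
  qed (use \<rho> k V_nonneg D_init t in auto)
  then show ?thesis by (simp add: zero_le_mult_iff)
qed

theorem lattice_comparison:
  assumes W: "lattice_solution T r k W" and Z: "lattice_supersolution T r k Z"
    and r: "bdd_below (range r)" and k: "\<And>i l. 0 \<le> k i l"
    and W_nonneg: "\<And>i t. t \<in> {0..T} \<Longrightarrow> 0 \<le> W i t"
    and Z_nonneg: "\<And>i t. t \<in> {0..T} \<Longrightarrow> 0 \<le> Z i t"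
    and init: "\<And>i. W i 0 \<le> Z i 0"
    and t: "t \<in> {0..T}"
  shows "W i t \<le> Z i t"
proof -
  have "0 \<le> Z i t - W i t"
  proof (rule lattice_supersolution_nonneg[where D = "\<lambda>i t. Z i t - W i t" and V = W])
    show "lattice_supersolution T r k (\<lambda>i t. Z i t - W i t)"
      using Z W by (rule lattice_supersolution_diff)
    show "lattice_supersolution T r k W"
      using W by (rule lattice_solution_imp_supersolution)
  qed (use r k W_nonneg Z_nonneg init t in auto)
  then show ?thesis by simp
qed

lemma lattice_solution_index_shift:
  assumes "lattice_solution T r k D"
  shows "lattice_solution T (\<lambda>i. r (i + \<sigma>)) (\<lambda>i l. k (i + \<sigma>) l) (\<lambda>i t. D (i + \<sigma>) t)"
  unfolding lattice_solution_def
proof (intro allI ballI conjI)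
  fix i t assume "t \<in> {0..T}"
  with assms have "(\<lambda>l. k (i + \<sigma>) l * D (i + \<sigma> + l) t) summable_on UNIV"
    and "(D (i + \<sigma>) has_real_derivative
      r (i + \<sigma>) * D (i + \<sigma>) t + (\<Sum>\<^sub>\<infinity>l. k (i + \<sigma>) l * D (i + \<sigma> + l) t)) (at t within {0..T})"
    unfolding lattice_solution_def by blast+
  then show "(\<lambda>l. k (i + \<sigma>) l * D (i + l + \<sigma>) t) summable_on UNIV"
    and "(D (i + \<sigma>) has_real_derivative
      r (i + \<sigma>) * D (i + \<sigma>) t + (\<Sum>\<^sub>\<infinity>l. k (i + \<sigma>) l * D (i + l + \<sigma>) t)) (at t within {0..T})"
    by (simp_all add: add_ac)
qed

section \<open>The exponential transform of the lattice equation\<close>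

locale hj_lattice =
  fixes U :: "int \<Rightarrow> real \<Rightarrow> real" and a :: "int \<Rightarrow> int \<Rightarrow> real" and R :: "int \<Rightarrow> real"
    and \<beta> T :: real
  assumes \<beta>_pos: "0 < \<beta>" and T_pos: "0 < T"
    and a_nonneg: "\<And>i l. 0 \<le> a i l"
    and R_bdd_below: "bdd_below (range R)"
    and summable: "\<And>i t. t \<in> {0..T} \<Longrightarrow> (\<lambda>l. a i l * exp (\<beta> * (U (i + l) t - U i t))) summable_on UNIV"
    and ode: "\<And>i t. t \<in> {0..T} \<Longrightarrow>
      (U i has_real_derivative R i + (\<Sum>\<^sub>\<infinity>l. a i l * exp (\<beta> * (U (i + l) t - U i t)))) (at t within {0..T})"
begin

definition rate :: "int \<Rightarrow> real \<Rightarrow> real" where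
  "rate i t = (\<Sum>\<^sub>\<infinity>l. a i l * exp (\<beta> * (U (i + l) t - U i t)))"

definition expU :: "int \<Rightarrow> real \<Rightarrow> real" where
  "expU i t = exp (\<beta> * U i t)"

lemma rate_nonneg: "0 \<le> rate i t"
  unfolding rate_def using a_nonneg by (intro infsum_nonneg) simp

lemma expU_pos: "0 < expU i t"
  unfolding expU_def by simp

lemma expU_neighbours_has_sum:
  assumes "t \<in> {0..T}"
  shows "((\<lambda>l. \<beta> * a i l * (c * expU (i + l) t)) has_sum \<beta> * c * expU i t * rate i t) UNIV"
proof -
  have term_eq: "\<beta> * a i l * (c * expU (i + l) t)
      = \<beta> * c * expU i t * (a i l * exp (\<beta> * (U (i + l) t - U i t)))" for l
    unfolding expU_def by (simp add: algebra_simps flip: exp_add)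
  show ?thesis
    unfolding term_eq rate_def by (rule has_sum_cmult_right[OF has_sum_infsum[OF summable[OF assms]]])
qed

lemma expU_has_derivative:
  assumes "t \<in> {0..T}"
  shows "(expU i has_real_derivative \<beta> * expU i t * (R i + rate i t)) (at t within {0..T})"
proof -
  have "((\<lambda>t. exp (\<beta> * U i t)) has_real_derivative exp (\<beta> * U i t) * (\<beta> * (R i + rate i t)))
      (at t within {0..T})"
    using ode[OF assms, of i] unfolding rate_def[symmetric] by (intro DERIV_chain2[OF DERIV_exp] DERIV_cmult)
  then show ?thesis unfolding expU_def by (simp add: algebra_simps)
qed

lemma expU_lattice_solution:
  "lattice_solution T (\<lambda>i. \<beta> * R i) (\<lambda>i l. \<beta> * a i l) expU"
  unfolding lattice_solution_def
proof (intro allI ballI conjI)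
  fix i t assume t: "t \<in> {0..T}"
  have hs: "((\<lambda>l. \<beta> * a i l * expU (i + l) t) has_sum \<beta> * expU i t * rate i t) UNIV"
    using expU_neighbours_has_sum[OF t, of i 1] by simp
  then show "(\<lambda>l. \<beta> * a i l * expU (i + l) t) summable_on UNIV"
    by (simp add: has_sum_iff)
  show "(expU i has_real_derivative \<beta> * R i * expU i t + (\<Sum>\<^sub>\<infinity>l. \<beta> * a i l * expU (i + l) t))
      (at t within {0..T})"
    using expU_has_derivative[OF t, of i] unfolding infsumI[OF hs] by (simp add: algebra_simps)
qed

lemma rates_bdd_below: "bdd_below (range (\<lambda>i. \<beta> * R i))"
proof -
  from R_bdd_below obtain m where "\<And>i. m \<le> R i" by (auto simp: bdd_below_def)
  then have "\<And>i. \<beta> * m \<le> \<beta> * R i" using \<beta>_pos by simp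
  then show ?thesis by (intro bdd_belowI[where m = "\<beta> * m"]) auto
qed

lemma kernel_nonneg: "0 \<le> \<beta> * a i l"
  using \<beta>_pos a_nonneg by simp

lemma U_le_initial_plus_linear:
  assumes M: "\<And>i. R i + rate i 0 \<le> M" and t: "t \<in> {0..T}"
  shows "U i t \<le> U i 0 + M * t"
proof -
  let ?Z = "\<lambda>i t. exp (\<beta> * M * t) * expU i 0"
  have "lattice_supersolution T (\<lambda>i. \<beta> * R i) (\<lambda>i l. \<beta> * a i l) ?Z"
  proof (rule lattice_supersolutionI)
    fix i t assume "t \<in> {0..T}"
    have hs: "((\<lambda>l. \<beta> * a i l * ?Z (i + l) t) has_sum \<beta> * exp (\<beta> * M * t) * expU i 0 * rate i 0) UNIV"
      using expU_neighbours_has_sum[of 0] T_pos by simp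
    then show "(\<lambda>l. \<beta> * a i l * ?Z (i + l) t) summable_on UNIV"
      by (simp add: has_sum_iff)
    show "(?Z i has_real_derivative \<beta> * M * ?Z i t) (at t within {0..T})"
      by (auto intro!: derivative_eq_intros)
    have "\<beta> * ?Z i t * (R i + rate i 0) \<le> \<beta> * ?Z i t * M"
      using M[of i] \<beta>_pos expU_pos[of i 0] by (intro mult_left_mono) auto
    then show "\<beta> * R i * ?Z i t + (\<Sum>\<^sub>\<infinity>l. \<beta> * a i l * ?Z (i + l) t) \<le> \<beta> * M * ?Z i t"
      unfolding infsumI[OF hs] by (simp add: algebra_simps)
  qed
  then have "expU i t \<le> ?Z i t"
    by (rule lattice_comparison[OF expU_lattice_solution _ rates_bdd_below kernel_nonneg])
      (use expU_pos t in \<open>auto simp: less_imp_le\<close>)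
  then have "exp (\<beta> * U i t) \<le> exp (\<beta> * (U i 0 + M * t))"
    unfolding expU_def by (simp add: algebra_simps flip: exp_add)
  then show ?thesis using \<beta>_pos by simp
qed

lemma U_increment_le:
  assumes M: "\<And>i. R i + rate i 0 \<le> M" and "0 \<le> x" "x \<le> y" "y \<le> T"
  shows "U i y - U i x \<le> M * (y - x)"
proof -
  define s where "s = y - x"
  have s: "0 \<le> s" "x \<in> {0..T - s}" "s \<in> {0..T}"
    using assms unfolding s_def by auto
  have W: "lattice_solution (T - s) (\<lambda>i. \<beta> * R i) (\<lambda>i l. \<beta> * a i l) (\<lambda>i t. expU i (t + s))"
    using lattice_solution_time_shift[of "T - s" s] expU_lattice_solution s by simp
  have Z: "lattice_supersolution (T - s) (\<lambda>i. \<beta> * R i) (\<lambda>i l. \<beta> * a i l)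
      (\<lambda>i t. exp (\<beta> * M * s) * expU i t)"
    using lattice_solution_restrict[OF lattice_solution_scale[OF expU_lattice_solution]] s
    by (intro lattice_solution_imp_supersolution) simp
  have "expU i (x + s) \<le> exp (\<beta> * M * s) * expU i x"
  proof (rule lattice_comparison[OF W Z rates_bdd_below kernel_nonneg])
    fix j
    have "\<beta> * U j s \<le> \<beta> * (U j 0 + M * s)"
      using U_le_initial_plus_linear[OF M s(3)] \<beta>_pos by simp
    then have "\<beta> * U j s \<le> \<beta> * M * s + \<beta> * U j 0"
      by (simp add: algebra_simps)
    then show "expU j (0 + s) \<le> exp (\<beta> * M * s) * expU j 0"
      unfolding expU_def by (simp flip: exp_add)
  qed (use expU_pos s in \<open>auto simp: less_imp_le\<close>)
  then have "exp (\<beta> * U i y) \<le> exp (\<beta> * (M * s + U i x))"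
    unfolding expU_def s_def by (simp add: algebra_simps flip: exp_add)
  then show ?thesis
    using \<beta>_pos unfolding s_def by simp
qed

lemma rate_le:
  assumes M: "\<And>i. R i + rate i 0 \<le> M" and t: "t \<in> {0..T}"
  shows "rate i t \<le> M - R i"
proof -
  have "R i + rate i t \<le> M"
    by (rule deriv_le_of_increments_le[OF T_pos t ode[OF t, of i, folded rate_def]])
      (rule U_increment_le[OF M])
  then show ?thesis by simp
qed

lemma shifted_neighbours_sum_le:
  assumes a_shift: "\<And>l. a (i + \<sigma>) l \<le> (1 + \<epsilon>) * a i l"
    and t: "t \<in> {0..T}" and "0 \<le> c"
  shows "(\<lambda>l. \<beta> * a (i + \<sigma>) l * (c * expU (i + l) t)) summable_on UNIV"
    and "(\<Sum>\<^sub>\<infinity>l. \<beta> * a (i + \<sigma>) l * (c * expU (i + l) t))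
      \<le> (1 + \<epsilon>) * (\<beta> * c * expU i t * rate i t)"
proof -
  have hs: "((\<lambda>l. \<beta> * a i l * (c * expU (i + l) t)) has_sum \<beta> * c * expU i t * rate i t) UNIV"
    by (rule expU_neighbours_has_sum[OF t])
  have shift_le: "\<beta> * a (i + \<sigma>) l * (c * expU (i + l) t) \<le> (1 + \<epsilon>) * (\<beta> * a i l * (c * expU (i + l) t))" for l
  proof -
    have "0 \<le> \<beta> * (c * expU (i + l) t)"
      using \<beta>_pos expU_pos[of "i + l" t] \<open>0 \<le> c\<close> by simp
    from mult_left_mono[OF a_shift[of l] this] show ?thesis by (simp add: algebra_simps)
  qed
  have shift_nonneg: "0 \<le> \<beta> * a (i + \<sigma>) l * (c * expU (i + l) t)" for l
    using kernel_nonneg[of "i + \<sigma>" l] expU_pos[of "i + l" t] \<open>0 \<le> c\<close> by simp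
  have bound_summable: "(\<lambda>l. (1 + \<epsilon>) * (\<beta> * a i l * (c * expU (i + l) t))) summable_on UNIV"
    using hs by (intro summable_on_cmult_right) (simp add: has_sum_iff)
  show sum: "(\<lambda>l. \<beta> * a (i + \<sigma>) l * (c * expU (i + l) t)) summable_on UNIV"
    using bound_summable shift_le shift_nonneg by (rule summable_on_comparison_test)
  have "(\<Sum>\<^sub>\<infinity>l. \<beta> * a (i + \<sigma>) l * (c * expU (i + l) t))
      \<le> (\<Sum>\<^sub>\<infinity>l. (1 + \<epsilon>) * (\<beta> * a i l * (c * expU (i + l) t)))"
    using sum bound_summable shift_le by (rule infsum_mono)
  also have "\<dots> = (1 + \<epsilon>) * (\<beta> * c * expU i t * rate i t)"
    unfolding infsum_cmult_right[OF hs[unfolded has_sum_iff, THEN conjunct1]] infsumI[OF hs] ..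
  finally show "(\<Sum>\<^sub>\<infinity>l. \<beta> * a (i + \<sigma>) l * (c * expU (i + l) t))
      \<le> (1 + \<epsilon>) * (\<beta> * c * expU i t * rate i t)" .
qed

lemma exp_weighted_supersolution_of_shift:
  assumes a_shift: "\<And>i l. a (i + \<sigma>) l \<le> (1 + \<epsilon>) * a i l" and "0 \<le> \<epsilon>"
    and R_shift: "\<And>i. R (i + \<sigma>) \<le> R i + \<rho>"
    and rate_bound: "\<And>i t. t \<in> {0..T} \<Longrightarrow> rate i t \<le> B"
  shows "lattice_supersolution T (\<lambda>i. \<beta> * R (i + \<sigma>)) (\<lambda>i l. \<beta> * a (i + \<sigma>) l)
    (\<lambda>i t. exp (\<beta> * (d + (\<rho> + \<epsilon> * B) * t)) * expU i t)"
proof (rule lattice_supersolutionI)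
  define c where "c = \<rho> + \<epsilon> * B"
  define E where "E t = exp (\<beta> * (d + c * t))" for t
  fix i t assume t: "t \<in> {0..T}"
  have "0 \<le> E t" unfolding E_def by simp
  note neighbours = shifted_neighbours_sum_le[where i = i, OF a_shift t this]
  show "(\<lambda>l. \<beta> * a (i + \<sigma>) l * (exp (\<beta> * (d + (\<rho> + \<epsilon> * B) * t)) * expU (i + l) t)) summable_on UNIV"
    using neighbours(1) unfolding E_def c_def .
  have dE: "(E has_real_derivative E t * (\<beta> * c)) (at t within {0..T})"
    unfolding E_def by (auto intro!: derivative_eq_intros)
  show "((\<lambda>t. exp (\<beta> * (d + (\<rho> + \<epsilon> * B) * t)) * expU i t) has_real_derivative
      E t * (\<beta> * c) * expU i t + \<beta> * expU i t * (R i + rate i t) * E t) (at t within {0..T})"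
    using DERIV_mult[OF dE expU_has_derivative[OF t]] unfolding E_def c_def .
  have "R (i + \<sigma>) + (1 + \<epsilon>) * rate i t \<le> c + R i + rate i t"
    using R_shift[of i] mult_left_mono[OF rate_bound[OF t, of i] \<open>0 \<le> \<epsilon>\<close>] unfolding c_def
    by (simp add: algebra_simps)
  then have "\<beta> * E t * expU i t * (R (i + \<sigma>) + (1 + \<epsilon>) * rate i t) \<le> \<beta> * E t * expU i t * (c + R i + rate i t)"
    using \<beta>_pos expU_pos[of i t] \<open>0 \<le> E t\<close> by (intro mult_left_mono) auto
  with neighbours(2) have "\<beta> * R (i + \<sigma>) * (E t * expU i t)
      + (\<Sum>\<^sub>\<infinity>l. \<beta> * a (i + \<sigma>) l * (E t * expU (i + l) t))
      \<le> E t * (\<beta> * c) * expU i t + \<beta> * expU i t * (R i + rate i t) * E t"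
    by (simp add: algebra_simps)
  then show "\<beta> * R (i + \<sigma>) * (exp (\<beta> * (d + (\<rho> + \<epsilon> * B) * t)) * expU i t)
      + (\<Sum>\<^sub>\<infinity>l. \<beta> * a (i + \<sigma>) l * (exp (\<beta> * (d + (\<rho> + \<epsilon> * B) * t)) * expU (i + l) t))
      \<le> E t * (\<beta> * c) * expU i t + \<beta> * expU i t * (R i + rate i t) * E t"
    unfolding E_def c_def .
qed

lemma U_shift_le:
  assumes a_shift: "\<And>i l. a (i + \<sigma>) l \<le> (1 + \<epsilon>) * a i l" and "0 \<le> \<epsilon>"
    and R_shift: "\<And>i. R (i + \<sigma>) \<le> R i + \<rho>"
    and rate_bound: "\<And>i t. t \<in> {0..T} \<Longrightarrow> rate i t \<le> B"
    and init: "\<And>i. U (i + \<sigma>) 0 \<le> U i 0 + d"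
    and t: "t \<in> {0..T}"
  shows "U (i + \<sigma>) t \<le> U i t + d + (\<rho> + \<epsilon> * B) * t"
proof -
  let ?E = "\<lambda>t. exp (\<beta> * (d + (\<rho> + \<epsilon> * B) * t))"
  have "expU (i + \<sigma>) t \<le> ?E t * expU i t"
  proof (rule lattice_comparison[OF lattice_solution_index_shift[OF expU_lattice_solution]
        exp_weighted_supersolution_of_shift[OF a_shift \<open>0 \<le> \<epsilon>\<close> R_shift rate_bound] _ _ _ _ _ t])
    show "bdd_below (range (\<lambda>i. \<beta> * R (i + \<sigma>)))"
      by (rule bdd_below_mono[OF rates_bdd_below]) auto
    show "expU (j + \<sigma>) 0 \<le> ?E 0 * expU j 0" for j
    proof -
      have "\<beta> * U (j + \<sigma>) 0 \<le> \<beta> * (d + U j 0)"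
        using init[of j] \<beta>_pos by simp
      then show ?thesis
        unfolding expU_def by (simp flip: exp_add add: algebra_simps)
    qed
  qed (use kernel_nonneg expU_pos in \<open>auto simp: less_imp_le\<close>)
  then have "exp (\<beta> * U (i + \<sigma>) t) \<le> exp (\<beta> * (U i t + d + (\<rho> + \<epsilon> * B) * t))"
    unfolding expU_def by (simp flip: exp_add add: algebra_simps)
  then show ?thesis
    using \<beta>_pos by simp
qed

lemma gradient_bound:
  assumes a_right: "\<And>i l. a (i + 1) l \<le> (1 + \<epsilon>) * a i l"
    and a_left: "\<And>i l. a (i - 1) l \<le> (1 + \<epsilon>) * a i l" and "0 \<le> \<epsilon>"
    and R_step: "\<And>i. \<bar>R (i + 1) - R i\<bar> \<le> \<rho>"
    and init_step: "\<And>i. \<bar>U (i + 1) 0 - U i 0\<bar> \<le> d"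
    and M: "\<And>i. R i + rate i 0 \<le> M" and R_lower: "\<And>i. R\<^sub>0 \<le> R i"
    and t: "t \<in> {0..T}"
  shows "\<bar>U (i + 1) t - U i t\<bar> \<le> d + (\<rho> + \<epsilon> * (M - R\<^sub>0)) * T"
proof -
  have rate_bound: "rate j s \<le> M - R\<^sub>0" if "s \<in> {0..T}" for j s
    using rate_le[OF M that, of j] R_lower[of j] by simp
  have "0 \<le> \<rho>" using R_step[of 0] by simp
  moreover have "0 \<le> M - R\<^sub>0" using M[of 0] R_lower[of 0] rate_nonneg[of 0 0] by simp
  ultimately have "(\<rho> + \<epsilon> * (M - R\<^sub>0)) * t \<le> (\<rho> + \<epsilon> * (M - R\<^sub>0)) * T"
    using t \<open>0 \<le> \<epsilon>\<close> by (intro mult_left_mono) auto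
  moreover have "U (i + 1) t \<le> U i t + d + (\<rho> + \<epsilon> * (M - R\<^sub>0)) * t"
  proof (rule U_shift_le[OF a_right \<open>0 \<le> \<epsilon>\<close> _ rate_bound _ t])
    show "R (j + 1) \<le> R j + \<rho>" for j using R_step[of j] by simp
    show "U (j + 1) 0 \<le> U j 0 + d" for j using init_step[of j] by simp
  qed
  moreover have "U (i + 1 + - 1) t \<le> U (i + 1) t + d + (\<rho> + \<epsilon> * (M - R\<^sub>0)) * t"
  proof (rule U_shift_le[OF _ \<open>0 \<le> \<epsilon>\<close> _ rate_bound _ t])
    show "a (j + - 1) l \<le> (1 + \<epsilon>) * a j l" for j l using a_left[of j l] by simp
    show "R (j + - 1) \<le> R j + \<rho>" for j using R_step[of "j - 1"] by simp
    show "U (j + - 1) 0 \<le> U j 0 + d" for j using init_step[of "j - 1"] by simp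
  qed
  ultimately show ?thesis by simp
qed

end

section \<open>The rescaled scheme\<close>

lemma decoupled_lattice_gradient_bound:
  fixes U :: "int \<Rightarrow> real \<Rightarrow> real" and R :: "int \<Rightarrow> real"
  assumes ode: "\<And>i t. t \<in> {0..T} \<Longrightarrow> (U i has_real_derivative R i) (at t within {0..T})"
    and R_step: "\<And>i. \<bar>R (i + 1) - R i\<bar> \<le> \<rho>"
    and init_step: "\<And>i. \<bar>U (i + 1) 0 - U i 0\<bar> \<le> d"
    and t: "t \<in> {0..T}"
  shows "\<bar>U (i + 1) t - U i t\<bar> \<le> d + \<rho> * t"
proof -
  let ?D = "\<lambda>s. U (i + 1) s - U i s"
  have "norm (?D t - ?D 0) \<le> \<rho> * norm (t - 0)"
    by (rule field_differentiable_bound[where S = "{0..T}" and f' = "\<lambda>_. R (i + 1) - R i"])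
      (use ode R_step t in \<open>auto intro: DERIV_diff\<close>)
  then show ?thesis
    using init_step[of i] t by simp
qed

locale scaled_hj_lattice =
  fixes R p G :: "real \<Rightarrow> real" and delta :: "nat \<Rightarrow> real" and u :: "nat \<Rightarrow> int \<Rightarrow> real \<Rightarrow> real"
    and T L L\<^sub>R L\<^sub>p R\<^sub>0 R\<^sub>1 p\<^sub>0 p\<^sub>1 G\<^sub>1 H :: real
  assumes delta_pos: "\<And>K. 1 \<le> K \<Longrightarrow> 0 < delta K"
    and hK_le: "\<And>K. hK delta K \<le> H"
    and R_lipschitz: "lipschitz_on L\<^sub>R UNIV R" and R_bounds: "\<And>x. R\<^sub>0 \<le> R x \<and> R x \<le> R\<^sub>1"
    and p_lipschitz: "lipschitz_on L\<^sub>p UNIV p" and p_bounds: "\<And>x. p\<^sub>0 \<le> p x \<and> p x \<le> p\<^sub>1"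
    and p_lower_pos: "0 < p\<^sub>0"
    and G_pos: "\<And>x. 0 < G x" and G_le: "\<And>x. G x \<le> G\<^sub>1 * exp (- \<bar>x\<bar>)"
    and L: "0 < L" "L < 1"
    and init_step: "\<And>K i. 1 \<le> K \<Longrightarrow> \<bar>u K (i + 1) 0 - u K i 0\<bar> \<le> L * delta K"
    and T_pos: "0 < T"
    and summable: "\<And>K i t. 1 \<le> K \<Longrightarrow> t \<in> {0..T} \<Longrightarrow> rhs_term p G delta u K i t summable_on UNIV"
    and ode: "\<And>K i t. 1 \<le> K \<Longrightarrow> t \<in> {0..T} \<Longrightarrow>
      ((\<lambda>s. u K i s) has_real_derivative
        R (real_of_int i * delta K) + (\<Sum>\<^sub>\<infinity>l. rhs_term p G delta u K i t l)) (at t within {0..T})"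
begin

definition initial_rate_bound :: real where
  "initial_rate_bound = 2 * (p\<^sub>1 * G\<^sub>1) * (1 + H) / (1 - L)"

definition gradient_constant :: real where
  "gradient_constant = L + (L\<^sub>R + L\<^sub>p / p\<^sub>0 * (R\<^sub>1 + initial_rate_bound - R\<^sub>0)) * T"

definition jump_kernel :: "nat \<Rightarrow> int \<Rightarrow> int \<Rightarrow> real" where
  "jump_kernel K j l = p (real_of_int (j + l) * delta K) * hK delta K * G (real_of_int l * hK delta K)"

lemma rhs_term_eq_jump_kernel:
  "rhs_term p G delta u K j s = (\<lambda>l. jump_kernel K j l * exp (ln (real K) * (u K (j + l) s - u K j s)))"
  unfolding rhs_term_def jump_kernel_def by (simp add: add.commute)

lemma hK_nonneg: "1 \<le> K \<Longrightarrow> 0 \<le> hK delta K"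
  using delta_pos[of K] by (simp add: hK_def)

lemma jump_kernel_nonneg: "1 \<le> K \<Longrightarrow> 0 \<le> jump_kernel K j l"
  unfolding jump_kernel_def
  using p_bounds[of "real_of_int (j + l) * delta K"] p_lower_pos G_pos[of "real_of_int l * hK delta K"] hK_nonneg
  by (intro mult_nonneg_nonneg) auto

lemma jump_kernel_le:
  assumes "1 \<le> K"
  shows "jump_kernel K j l \<le> p\<^sub>1 * G\<^sub>1 * hK delta K * exp (- (\<bar>real_of_int l\<bar> * hK delta K))"
proof -
  let ?x = "real_of_int (j + l) * delta K" and ?y = "real_of_int l * hK delta K"
  have "G ?y \<le> G\<^sub>1 * exp (- (\<bar>real_of_int l\<bar> * hK delta K))"
    using G_le[of ?y] hK_nonneg[OF assms] by (simp add: abs_mult)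
  then have "p ?x * G ?y \<le> p\<^sub>1 * (G\<^sub>1 * exp (- (\<bar>real_of_int l\<bar> * hK delta K)))"
    using p_bounds[of ?x] p_lower_pos G_pos[of ?y] by (intro mult_mono) auto
  from mult_left_mono[OF this hK_nonneg[OF assms]] show ?thesis
    unfolding jump_kernel_def by (simp add: ac_simps)
qed

lemma jump_kernel_shift_le:
  assumes "1 \<le> K" "\<bar>\<sigma>\<bar> = 1"
  shows "jump_kernel K (j + \<sigma>) l \<le> (1 + L\<^sub>p / p\<^sub>0 * delta K) * jump_kernel K j l"
proof -
  have "p (real_of_int (j + \<sigma> + l) * delta K)
      \<le> (1 + L\<^sub>p / p\<^sub>0 * \<bar>real_of_int (j + \<sigma> + l) * delta K - real_of_int (j + l) * delta K\<bar>)
        * p (real_of_int (j + l) * delta K)"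
    by (rule le_mult_of_lipschitz_lower_bound[OF p_lipschitz _ p_lower_pos]) (use p_bounds in auto)
  also have "\<bar>real_of_int (j + \<sigma> + l) * delta K - real_of_int (j + l) * delta K\<bar> = delta K"
    using assms delta_pos[of K] by (simp add: algebra_simps abs_mult flip: of_int_abs)
  finally have p_le: "p (real_of_int (j + \<sigma> + l) * delta K) \<le> (1 + L\<^sub>p / p\<^sub>0 * delta K) * p (real_of_int (j + l) * delta K)" .
  have "0 \<le> hK delta K * G (real_of_int l * hK delta K)"
    using G_pos[of "real_of_int l * hK delta K"] hK_nonneg[OF assms(1)] by simp
  from mult_right_mono[OF p_le this] show ?thesis
    unfolding jump_kernel_def by (simp only: mult.assoc)
qed

lemma R_step_le: "0 < \<delta> \<Longrightarrow> \<bar>R (real_of_int (i + 1) * \<delta>) - R (real_of_int i * \<delta>)\<bar> \<le> L\<^sub>R * \<delta>"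
  using lipschitz_onD[OF R_lipschitz, of "real_of_int (i + 1) * \<delta>" "real_of_int i * \<delta>"]
  by (simp add: dist_real_def algebra_simps)

lemma kernel_constant_nonneg: "0 \<le> p\<^sub>1 * G\<^sub>1"
  using p_bounds[of 0] p_lower_pos G_pos[of 0] G_le[of 0] by (simp add: zero_le_mult_iff)

lemma interaction_term_nonneg: "0 \<le> L\<^sub>p / p\<^sub>0 * (R\<^sub>1 + initial_rate_bound - R\<^sub>0)"
proof -
  have "0 \<le> H"
    using hK_le[of 1] by (simp add: hK_def)
  then have "0 \<le> initial_rate_bound"
    unfolding initial_rate_bound_def using L kernel_constant_nonneg by simp
  with R_bounds[of 0] show ?thesis
    using lipschitz_on_nonneg[OF p_lipschitz] p_lower_pos by simp
qed

lemma gradient_bound_decoupled: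
  assumes t: "t \<in> {0..T}"
  shows "\<bar>u 1 (i + 1) t - u 1 i t\<bar> \<le> delta 1 * gradient_constant"
proof -
  have "rhs_term p G delta u 1 j s l = 0" for j s l
    unfolding rhs_term_def hK_def by simp
  then have "\<bar>u 1 (i + 1) t - u 1 i t\<bar> \<le> L * delta 1 + L\<^sub>R * delta 1 * t"
    using ode[of 1] init_step[of 1] R_step_le delta_pos[of 1] t
    by (intro decoupled_lattice_gradient_bound[where T = T and R = "\<lambda>j. R (real_of_int j * delta 1)"]) auto
  also have "\<dots> \<le> delta 1 * (L + L\<^sub>R * T)"
    using delta_pos[of 1] lipschitz_on_nonneg[OF R_lipschitz] t by (simp add: algebra_simps mult_left_mono)
  also have "\<dots> \<le> delta 1 * gradient_constant"
  proof (rule mult_left_mono)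
    show "L + L\<^sub>R * T \<le> gradient_constant"
      using mult_nonneg_nonneg[OF interaction_term_nonneg, of T] T_pos
      unfolding gradient_constant_def by (simp add: distrib_right)
  qed (use delta_pos[of 1] in simp)
  finally show ?thesis .
qed

lemma hj_lattice_instance:
  assumes "2 \<le> K"
  shows "hj_lattice (u K) (jump_kernel K) (\<lambda>j. R (real_of_int j * delta K)) (ln (real K)) T"
proof unfold_locales
  show "0 < ln (real K)" using assms by simp
  show "0 < T" by (rule T_pos)
  show "0 \<le> jump_kernel K i l" for i l using assms by (intro jump_kernel_nonneg) simp
  show "bdd_below (range (\<lambda>j. R (real_of_int j * delta K)))"
    using R_bounds by (intro bdd_belowI[where m = R\<^sub>0]) auto
  fix i t assume "t \<in> {0..T}"
  then show "(\<lambda>l. jump_kernel K i l * exp (ln (real K) * (u K (i + l) t - u K i t))) summable_on UNIV"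
    and "(u K i has_real_derivative R (real_of_int i * delta K)
      + (\<Sum>\<^sub>\<infinity>l. jump_kernel K i l * exp (ln (real K) * (u K (i + l) t - u K i t)))) (at t within {0..T})"
    using summable[where K = K and i = i and t = t] ode[where K = K and i = i and t = t] assms
    unfolding rhs_term_eq_jump_kernel by simp_all
qed

lemma initial_rate_le:
  assumes "2 \<le> K"
  shows "R (real_of_int j * delta K) + hj_lattice.rate (u K) (jump_kernel K) (ln (real K)) j 0
    \<le> R\<^sub>1 + initial_rate_bound"
proof -
  interpret hj: hj_lattice "u K" "jump_kernel K" "\<lambda>j. R (real_of_int j * delta K)" "ln (real K)" T
    by (rule hj_lattice_instance[OF assms])
  let ?h = "hK delta K"
  have h: "0 < ?h" using delta_pos[of K] assms by (simp add: hK_def)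
  have "hj.rate j 0 \<le> 2 * (p\<^sub>1 * G\<^sub>1) * (1 + ?h) / (1 - L)"
    unfolding hj.rate_def
  proof (rule kernel_exp_moment_le[OF h L])
    show "0 \<le> p\<^sub>1 * G\<^sub>1" by (rule kernel_constant_nonneg)
    show "jump_kernel K j l \<le> p\<^sub>1 * G\<^sub>1 * ?h * exp (- (\<bar>real_of_int l\<bar> * ?h))" for l
      using assms by (intro jump_kernel_le) simp
    show "ln (real K) * (u K (j + l) 0 - u K j 0) \<le> L * ?h * \<bar>real_of_int l\<bar>" for l
    proof -
      have "u K (j + l) 0 - u K j 0 \<le> L * delta K * \<bar>real_of_int l\<bar>"
        using abs_diff_le_of_unit_steps[where f = "\<lambda>j. u K j 0", OF init_step[of K], of j l] assms
        by simp
      from mult_left_mono[OF this, of "ln (real K)"] assms show ?thesis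
        by (simp add: hK_def algebra_simps)
    qed
    show "(\<lambda>l. jump_kernel K j l * exp (ln (real K) * (u K (j + l) 0 - u K j 0))) summable_on UNIV"
      using hj.summable[of 0 j] T_pos by simp
  qed
  also have "\<dots> \<le> initial_rate_bound"
    unfolding initial_rate_bound_def using hK_le[of K] L kernel_constant_nonneg
    by (intro divide_right_mono mult_left_mono) auto
  finally show ?thesis using R_bounds by (simp add: add_mono)
qed

lemma gradient_bound_interacting:
  assumes "2 \<le> K" "t \<in> {0..T}"
  shows "\<bar>u K (i + 1) t - u K i t\<bar> \<le> delta K * gradient_constant"
proof -
  interpret hj: hj_lattice "u K" "jump_kernel K" "\<lambda>j. R (real_of_int j * delta K)" "ln (real K)" T
    by (rule hj_lattice_instance[OF assms(1)])
  have K: "1 \<le> K" using assms by simp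
  have "\<bar>u K (i + 1) t - u K i t\<bar>
      \<le> L * delta K + (L\<^sub>R * delta K + L\<^sub>p / p\<^sub>0 * delta K * (R\<^sub>1 + initial_rate_bound - R\<^sub>0)) * T"
  proof (rule hj.gradient_bound)
    show "jump_kernel K (j + 1) l \<le> (1 + L\<^sub>p / p\<^sub>0 * delta K) * jump_kernel K j l" for j l
      using jump_kernel_shift_le[OF K, of 1] by simp
    show "jump_kernel K (j - 1) l \<le> (1 + L\<^sub>p / p\<^sub>0 * delta K) * jump_kernel K j l" for j l
      using jump_kernel_shift_le[OF K, of "- 1"] by simp
    show "0 \<le> L\<^sub>p / p\<^sub>0 * delta K"
      using lipschitz_on_nonneg[OF p_lipschitz] p_lower_pos delta_pos[OF K] by simp
  qed (use R_step_le delta_pos[OF K] init_step[OF K] initial_rate_le[OF assms(1)] R_bounds assms(2) in auto)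
  then show ?thesis
    unfolding gradient_constant_def by (simp add: algebra_simps)
qed

theorem rescaled_gradient_bound:
  assumes "1 \<le> K" "t \<in> {0..T}"
  shows "\<bar>(u K (i + 1) t - u K i t) / delta K\<bar> \<le> gradient_constant"
proof -
  have "\<bar>u K (i + 1) t - u K i t\<bar> \<le> delta K * gradient_constant"
  proof (cases "K = 1")
    case True
    with gradient_bound_decoupled[OF assms(2)] show ?thesis by simp
  next
    case False
    with assms show ?thesis by (intro gradient_bound_interacting) auto
  qed
  with delta_pos[OF assms(1)] show ?thesis
    by (simp add: abs_divide pos_divide_le_eq mult.commute)
qed

end

theorem proposition4p2:
  fixes R p G :: "real \<Rightarrow> real"
    and delta :: "nat \<Rightarrow> real"
    and u0 :: "nat \<Rightarrow> real \<Rightarrow> real"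
    and u :: "nat \<Rightarrow> int \<Rightarrow> real \<Rightarrow> real"
    and T N :: real
  assumes delta_pos: "\<forall>K\<ge>1. delta K > 0"
    and delta_lim: "delta \<longlonglongrightarrow> 0"
    and h_lim: "hK delta \<longlonglongrightarrow> 0"
    and A1_R: "\<exists>LR. lipschitz_on LR UNIV R"
    and A1_p: "\<exists>Lp. lipschitz_on Lp UNIV p"
    and A1_Rbd: "\<exists>Rlo Rhi. \<forall>x. Rlo \<le> R x \<and> R x \<le> Rhi"
    and A1_pbd: "\<exists>plo phi. 0 < plo \<and> (\<forall>x. plo \<le> p x \<and> p x \<le> phi)"
    and A2_pos: "\<forall>x. G x > 0"
    and A2_cont: "continuous_on UNIV G"
    and A2_int: "(G has_integral 1) UNIV"
    and A2_f: "\<exists>f flo fhi. 0 < flo \<and> (\<forall>x. flo \<le> f x \<and> f x \<le> fhi)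
                 \<and> (\<forall>x. G x = f x * exp (- \<bar>x\<bar>))"
    and A3: "\<exists>A B1. A > 0 \<and> B1 > 0 \<and> (\<forall>K\<ge>1. \<forall>i::int.
               u0 K (real_of_int i * delta K) \<le> - A * \<bar>real_of_int i * delta K\<bar> + B1)"
    and A4: "\<exists>L. 0 < L \<and> L < 1 \<and> (\<forall>K\<ge>1. \<forall>i::int.
               \<bar>u0 K (real_of_int (i + 1) * delta K) - u0 K (real_of_int i * delta K)\<bar>
                 \<le> L * delta K)"
    and T_pos: "T > 0"
    and N_nonneg: "N \<ge> 0"
    and init: "\<forall>K\<ge>1. \<forall>i::int. u K i 0 = u0 K (real_of_int i * delta K)"
    and summ: "\<forall>K\<ge>1. \<forall>i::int. \<forall>t\<in>{0..T}.
                 rhs_term p G delta u K i t summable_on UNIV"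
    and ode: "\<forall>K\<ge>1. \<forall>i::int. \<forall>t\<in>{0..T}.
                ((\<lambda>s. u K i s) has_real_derivative
                   (R (real_of_int i * delta K) + (\<Sum>\<^sub>\<infinity>l. rhs_term p G delta u K i t l)))
                (at t within {0..T})"
  shows "\<exists>C. \<forall>K\<ge>1. \<forall>t\<in>{0..T}. \<forall>i::int. \<bar>real_of_int i * delta K\<bar> \<le> N \<longrightarrow>
           \<bar>(u K (i + 1) t - u K i t) / delta K\<bar> \<le> C"
proof -
  obtain L\<^sub>R L\<^sub>p where R_lip: "lipschitz_on L\<^sub>R UNIV R" and p_lip: "lipschitz_on L\<^sub>p UNIV p"
    using A1_R A1_p by blast
  obtain R\<^sub>0 R\<^sub>1 p\<^sub>0 p\<^sub>1 where R_bounds: "\<And>x. R\<^sub>0 \<le> R x \<and> R x \<le> R\<^sub>1"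
    and p_bounds: "0 < p\<^sub>0" "\<And>x. p\<^sub>0 \<le> p x \<and> p x \<le> p\<^sub>1"
    using A1_Rbd A1_pbd by blast
  obtain G\<^sub>1 where G_le: "\<And>x. G x \<le> G\<^sub>1 * exp (- \<bar>x\<bar>)"
    using A2_f by (metis mult_right_mono exp_ge_zero)
  obtain L where L: "0 < L" "L < 1"
    and init_step: "\<And>K i. 1 \<le> K \<Longrightarrow> \<bar>u K (i + 1) 0 - u K i 0\<bar> \<le> L * delta K"
    using A4 init by auto
  obtain H where hK_bound: "\<And>K. hK delta K \<le> H"
    using convergent_imp_Bseq[OF convergentI[OF h_lim]] by (auto simp: Bseq_def dest: abs_le_D1)
  \<comment> \<open>The bound is uniform in \<open>i\<close>.\<close>
  interpret scaled_hj_lattice R p G delta u T L L\<^sub>R L\<^sub>p R\<^sub>0 R\<^sub>1 p\<^sub>0 p\<^sub>1 G\<^sub>1 H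
    by unfold_locales
      (use delta_pos hK_bound R_lip R_bounds p_lip p_bounds A2_pos G_le L init_step T_pos summ ode in auto)
  show ?thesis
    using rescaled_gradient_bound by blast
qed

end
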